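(* Let $s>1$. Let $z\in H$ with $\operatorname{Im} z<1$ be such that no element of $\Gamma_l$ maps $z$ into $\{w\in H:\operatorname{Im} w>1\}$. Then for all $t$, $$\Pi_l(z,t)\le \Pi_l(h,z,t)\le \Pi_l(z,t+1),$$ and $$E^l(z,s)=s\int_0^\infty e^{-st}\,\Pi_l(h,z,t)\,dt,$$ $$s\int_0^\infty e^{-st}\,\Pi_l(z,t)\,dt\le E^l(z,s)\le s\int_0^\infty e^{-st}\,\Pi_l(z,t+1)\,dt.$$
   Context: Let $\{S_l\}$ be a degenerating family of hyperbolic Riemann surfaces of genus $g$ with one puncture, parametrized by $l$ near $0\in\mathbf{R}^{6g-4}$. For each $l$, $\Gamma_l$ is a Fuchsian group with $S_l\simeq H/\Gamma_l$, where $H$ is the upper half plane with hyperbolic distance $d(\cdot,\cdot)$; $\Gamma_l$ contains $z\mapsto z+1$, and $\Gamma_\infty$ is the cyclic group it generates. The Eisenstein series is $E^l(z,s)=\sum_{\delta\in\Gamma_\infty\backslash\Gamma_l}(\operatorname{Im}\delta z)^s$ for $z\in H$, $\operatorname{Re}s>1$. For $z\in H$ and $[\delta]\in\Gamma_\infty\backslash\Gamma_l$, the canonical representative $\hat\delta$ is the unique element of $[\delta]$ with $-\tfrac12\le\operatorname{Re}\hat\delta z<\tfrac12$. Let $h=\{w\in H: -\tfrac12\le\operatorname{Re} w<\tfrac12,\ \operatorname{Im} w=1\}$. For $z$ with $\operatorname{Im} z<1$ define $\Pi_l(h,z,t)=\#\{[\delta]\in\Gamma_\infty\backslash\Gamma_l: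 d(h,\hat\delta z)\le t\}$ and $\Pi_l(z,t)=\#\{[\delta]\in\Gamma_\infty\backslash\Gamma_l: d(i,\hat\delta z)\le t\}$. *)

theory Defs
  imports "HOL-Analysis.Analysis"
begin

text \<open>Real 2x2 matrices (a,b,c,d) standing for [[a,b],[c,d]].\<close>
type_synonym mat2 = "real \<times> real \<times> real \<times> real"

fun mmul :: "mat2 \<Rightarrow> mat2 \<Rightarrow> mat2" where
  "mmul (a,b,c,d) (e,f,g,h) = (a*e+b*g, a*f+b*h, c*e+d*g, c*f+d*h)"

fun mdet :: "mat2 \<Rightarrow> real" where
  "mdet (a,b,c,d) = a*d - b*c"

fun minv :: "mat2 \<Rightarrow> mat2" where
  "minv (a,b,c,d) = (d, -b, -c, a)"

fun mnorm_le :: "mat2 \<Rightarrow> real \<Rightarrow> bool" where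
  "mnorm_le (a,b,c,d) R = (\<bar>a\<bar> \<le> R \<and> \<bar>b\<bar> \<le> R \<and> \<bar>c\<bar> \<le> R \<and> \<bar>d\<bar> \<le> R)"

fun mob :: "mat2 \<Rightarrow> complex \<Rightarrow> complex" where
  "mob (a,b,c,d) z = (of_real a * z + of_real b) / (of_real c * z + of_real d)"

definition Tmat :: mat2 where "Tmat = (1,1,0,1)"

text \<open>A Fuchsian group: a discrete subgroup of SL(2,R) (acting via Moebius maps,
  i.e. as a subgroup of PSL(2,R)).\<close>
definition fuchsian :: "mat2 set \<Rightarrow> bool" where
  "fuchsian \<Gamma> \<longleftrightarrow>
     (\<forall>g\<in>\<Gamma>. mdet g = 1) \<and> (1,0,0,1) \<in> \<Gamma> \<and>
     (\<forall>g\<in>\<Gamma>. \<forall>k\<in>\<Gamma>. mmul g k \<in> \<Gamma>) \<and> (\<forall>g\<in>\<Gamma>. minv g \<in> \<Gamma>) \<and>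
     (\<forall>R. finite {g\<in>\<Gamma>. mnorm_le g R})"

definition H :: "complex set" where "H = {z. Im z > 0}"

definition hdist :: "complex \<Rightarrow> complex \<Rightarrow> real" where
  "hdist z w = arcosh (1 + (cmod (z - w))\<^sup>2 / (2 * Im z * Im w))"

text \<open>The relation whose classes are the right cosets of the cyclic group Gamma_infinity generated by z -> z+1
  (taken at the level of Moebius maps on H, i.e. in PSL(2,R)).\<close>
definition cusp_rel :: "mat2 set \<Rightarrow> (mat2 \<times> mat2) set" where
  "cusp_rel \<Gamma> = {(\<delta>, \<delta>'). \<delta> \<in> \<Gamma> \<and> \<delta>' \<in> \<Gamma> \<and>
      (\<exists>n::int. \<forall>w\<in>H. mob \<delta>' w = mob \<delta> w + of_int n)}"

definition cosets_inf :: "mat2 set \<Rightarrow> mat2 set set" where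
  "cosets_inf \<Gamma> = \<Gamma> // cusp_rel \<Gamma>"

definition canon_pt :: "mat2 set \<Rightarrow> complex \<Rightarrow> complex" where
  "canon_pt C z = (THE w. w \<in> (\<lambda>\<delta>. mob \<delta> z) ` C \<and> -1/2 \<le> Re w \<and> Re w < 1/2)"

definition hseg :: "complex set" where
  "hseg = {w. -1/2 \<le> Re w \<and> Re w < 1/2 \<and> Im w = 1}"

definition dist_h :: "complex \<Rightarrow> real" where
  "dist_h w = (INF u\<in>hseg. hdist u w)"

definition Pi_h :: "mat2 set \<Rightarrow> complex \<Rightarrow> real \<Rightarrow> nat" where
  "Pi_h \<Gamma> z t = card {C \<in> cosets_inf \<Gamma>. dist_h (canon_pt C z) \<le> t}"

definition Pi_i :: "mat2 set \<Rightarrow> complex \<Rightarrow> real \<Rightarrow> nat" where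
  "Pi_i \<Gamma> z t = card {C \<in> cosets_inf \<Gamma>. hdist \<i> (canon_pt C z) \<le> t}"

text \<open>Eisenstein series (as an extended nonnegative real; for s > 1 it converges).\<close>
definition eisenstein :: "mat2 set \<Rightarrow> complex \<Rightarrow> real \<Rightarrow> ennreal" where
  "eisenstein \<Gamma> z s = infsum (\<lambda>C. ennreal (Im (canon_pt C z) powr s)) (cosets_inf \<Gamma>)"

end

theory Submission
  imports Defs
begin

text \<open>Translate the representative so that w = \<delta>z lies in the strip \<bar>Re w\<bar> \<le> 1/2; by hypothesis
  0 < Im w \<le> 1. Then the distance from w to the horocyclic segment h is exactly - ln (Im w),
  attained straight above w, while d(i, w) lies between - ln (Im w) and - ln (Im w) + 1; this
  compares the two counting functions. Since (Im w) powr s = exp (- s d(h, w)), the Eisenstein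
  series is a sum of exp (- s g) over the cosets, and any such sum with finite sublevel sets of g is
  the Laplace transform s \<integral> exp (- s t) #{g \<le> t} dt. The sublevel sets are finite because
  Im w \<ge> \<epsilon> bounds the entries of the matrix and \<Gamma> is discrete.\<close>

lemma nn_integral_exp_tail:
  fixes s a :: real
  assumes "s > 0"
  shows "(\<integral>\<^sup>+t. ennreal (s * exp (- s * t)) * indicator {a..} t \<partial>lborel) = ennreal (exp (- s * a))"
proof -
  have "(\<integral>\<^sup>+t. ennreal (s * exp (- s * t)) * indicator {a..} t \<partial>lborel) = ennreal (0 - (- exp (- s * a)))"
  proof (rule nn_integral_FTC_atLeast)
    show "\<And>x. ((\<lambda>t. - exp (- s * t)) has_real_derivative s * exp (- s * x)) (at x)"
      by (auto intro!: derivative_eq_intros)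
    show "((\<lambda>t. - exp (- s * t)) \<longlongrightarrow> 0) at_top"
      using assms by real_asymp
  qed (use assms in auto)
  then show ?thesis by simp
qed

lemma infsum_ennreal_eq_SUP_sublevel:
  fixes f :: "'a \<Rightarrow> ennreal" and g :: "'a \<Rightarrow> real"
  assumes fin: "\<And>n::nat. finite {x\<in>D. g x \<le> real n}"
  shows "infsum f D = (SUP n::nat. sum f {x\<in>D. g x \<le> real n})"
proof -
  have "infsum f D = (SUP F\<in>{F. finite F \<and> F \<subseteq> D}. sum f F)"
    by (rule nonneg_infsum_complete) simp
  also have "\<dots> = (SUP n::nat. sum f {x\<in>D. g x \<le> real n})"
  proof (rule antisym)
    show "(SUP F\<in>{F. finite F \<and> F \<subseteq> D}. sum f F) \<le> (SUP n::nat. sum f {x\<in>D. g x \<le> real n})"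
    proof (rule SUP_least)
      fix F assume F: "F \<in> {F. finite F \<and> F \<subseteq> D}"
      obtain n :: nat where "Max (insert 0 (g ` F)) \<le> real n"
        using real_arch_simple by blast
      then have "F \<subseteq> {x\<in>D. g x \<le> real n}"
        using F by (auto dest!: Max_ge[of "insert 0 (g ` F)" "g _", rotated])
      then have "sum f F \<le> sum f {x\<in>D. g x \<le> real n}"
        using fin by (intro sum_mono2) auto
      then show "sum f F \<le> (SUP n::nat. sum f {x\<in>D. g x \<le> real n})"
        by (rule SUP_upper2[OF UNIV_I])
    qed
    show "(SUP n::nat. sum f {x\<in>D. g x \<le> real n}) \<le> (SUP F\<in>{F. finite F \<and> F \<subseteq> D}. sum f F)"
      using fin by (intro SUP_least SUP_upper) auto
  qed
  finally show ?thesis .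
qed

lemma SUP_card_sublevel_ennreal:
  fixes g :: "'a \<Rightarrow> real"
  assumes fin: "finite {x\<in>D. g x \<le> t}"
  shows "(SUP n::nat. of_nat (card {x\<in>D. g x \<le> real n \<and> g x \<le> t}) :: ennreal)
    = of_nat (card {x\<in>D. g x \<le> t})"
proof (rule antisym)
  show "(SUP n::nat. of_nat (card {x\<in>D. g x \<le> real n \<and> g x \<le> t}) :: ennreal)
      \<le> of_nat (card {x\<in>D. g x \<le> t})"
    using fin by (intro SUP_least of_nat_mono card_mono) auto
  obtain N :: nat where "t \<le> real N" using real_arch_simple by blast
  then have "{x\<in>D. g x \<le> real N \<and> g x \<le> t} = {x\<in>D. g x \<le> t}" by auto
  then show "of_nat (card {x\<in>D. g x \<le> t})
      \<le> (SUP n::nat. of_nat (card {x\<in>D. g x \<le> real n \<and> g x \<le> t}) :: ennreal)"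
    by (intro SUP_upper2[of N]) auto
qed

text \<open>exp (- s g x) is the integral of s exp (- s t) over [g x, \<infinity>); sum this over the increasing
  finite sublevel sets {g \<le> n} and use monotone convergence.\<close>
lemma infsum_exp_eq_nn_integral_counting:
  fixes g :: "'a \<Rightarrow> real"
  assumes s: "s > 0" and nonneg: "\<And>x. x \<in> D \<Longrightarrow> g x \<ge> 0"
    and fin: "\<And>t. finite {x\<in>D. g x \<le> t}"
  shows "infsum (\<lambda>x. ennreal (exp (- s * g x))) D
     = (\<integral>\<^sup>+ t\<in>{0..}. ennreal (s * exp (- s * t) * real (card {x\<in>D. g x \<le> t})) \<partial>lborel)"
proof -
  define S where "S n = {x\<in>D. g x \<le> real n}" for n :: nat
  have finS: "finite (S n)" for n unfolding S_def by (rule fin)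
  define F where "F n t = (\<Sum>x\<in>S n. ennreal (s * exp (- s * t)) * indicator {g x..} t)" for n t
  have F_eq: "F n t = ennreal (s * exp (- s * t)) * of_nat (card {x\<in>D. g x \<le> real n \<and> g x \<le> t})" for n t
  proof -
    have "F n t = (\<Sum>x\<in>{x\<in>S n. g x \<le> t}. ennreal (s * exp (- s * t)))"
      unfolding F_def using finS by (intro sum.mono_neutral_cong_right) (auto simp: indicator_def)
    also have "{x\<in>S n. g x \<le> t} = {x\<in>D. g x \<le> real n \<and> g x \<le> t}"
      unfolding S_def by auto
    finally show ?thesis by (simp add: mult.commute)
  qed
  have "incseq F"
    by (auto simp: incseq_def le_fun_def F_eq intro!: mult_left_mono card_mono
        finite_subset[OF _ fin[of "real _"]])
  have integrand: "ennreal (s * exp (- s * t) * real (card {x\<in>D. g x \<le> t})) * indicator {0..} t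
      = (SUP n. F n t)" for t
  proof -
    have "t < 0 \<Longrightarrow> card {x\<in>D. g x \<le> t} = 0"
      using nonneg by (subst card_0_eq[OF fin]) force
    then have "ennreal (s * exp (- s * t) * real (card {x\<in>D. g x \<le> t})) * indicator {0..} t
        = ennreal (s * exp (- s * t)) * of_nat (card {x\<in>D. g x \<le> t})"
      using s by (cases "t \<ge> 0") (auto simp: ennreal_mult' ennreal_of_nat_eq_real_of_nat)
    then show ?thesis
      unfolding F_eq SUP_mult_left_ennreal[symmetric] SUP_card_sublevel_ennreal[OF fin] .
  qed
  have "(\<integral>\<^sup>+ t\<in>{0..}. ennreal (s * exp (- s * t) * real (card {x\<in>D. g x \<le> t})) \<partial>lborel)
      = (\<integral>\<^sup>+ t. (SUP n. F n t) \<partial>lborel)"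
    by (simp only: integrand)
  also have "\<dots> = (SUP n. integral\<^sup>N lborel (F n))"
    by (rule nn_integral_monotone_convergence_SUP[OF \<open>incseq F\<close>])
      (unfold F_def[abs_def], measurable)
  also have "\<dots> = (SUP n. sum (\<lambda>x. ennreal (exp (- s * g x))) (S n))"
    unfolding F_def[abs_def] by (subst nn_integral_sum) (simp_all only: nn_integral_exp_tail[OF s], measurable)
  also have "\<dots> = infsum (\<lambda>x. ennreal (exp (- s * g x))) D"
    unfolding S_def by (rule infsum_ennreal_eq_SUP_sublevel[symmetric]) (rule fin)
  finally show ?thesis ..
qed

lemma mob_denom_nonzero:
  assumes "a * d - b * c = (1::real)" "Im w > 0"
  shows "of_real c * w + of_real d \<noteq> 0"
proof
  assume h: "of_real c * w + of_real d = 0"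
  then have "Im (of_real c * w + of_real d) = 0" by simp
  then have "c = 0" using assms(2) by simp
  then show False using h assms(1) by simp
qed

lemma Im_mob:
  assumes "a * d - b * c = (1::real)" "Im w > 0"
  shows "Im (mob (a,b,c,d) w) = Im w / (cmod (of_real c * w + of_real d))\<^sup>2"
proof -
  have "Im (mob (a,b,c,d) w)
     = (Im (of_real a * w + of_real b) * Re (of_real c * w + of_real d)
        - Re (of_real a * w + of_real b) * Im (of_real c * w + of_real d))
       / (cmod (of_real c * w + of_real d))\<^sup>2"
    unfolding mob.simps Im_divide cmod_power2 by simp
  also have "Im (of_real a * w + of_real b) * Re (of_real c * w + of_real d)
        - Re (of_real a * w + of_real b) * Im (of_real c * w + of_real d) = (a * d - b * c) * Im w"
    by (simp add: algebra_simps)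
  finally show ?thesis using assms(1) by simp
qed

lemma fuchsian_mdet: "fuchsian \<Gamma> \<Longrightarrow> g \<in> \<Gamma> \<Longrightarrow> mdet g = 1"
  by (simp add: fuchsian_def)

definition transl :: "int \<Rightarrow> mat2" where
  "transl n = (1, of_int n, 0, 1)"

lemma transl_in_fuchsian:
  assumes "fuchsian \<Gamma>" "Tmat \<in> \<Gamma>"
  shows "transl n \<in> \<Gamma>"
proof -
  have nat: "transl (int k) \<in> \<Gamma>" for k
  proof (induction k)
    case 0
    then show ?case using assms(1) by (simp add: transl_def fuchsian_def)
  next
    case (Suc k)
    have "mmul Tmat (transl (int k)) \<in> \<Gamma>" using assms Suc by (simp add: fuchsian_def)
    then show ?case by (simp add: Tmat_def transl_def add.commute)
  qed
  show ?thesis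
  proof (cases "n \<ge> 0")
    case True
    then show ?thesis using nat[of "nat n"] by simp
  next
    case False
    have "minv (transl (int (nat (- n)))) \<in> \<Gamma>"
      using assms(1) nat[of "nat (- n)"] unfolding fuchsian_def by blast
    then show ?thesis using False by (simp add: transl_def)
  qed
qed

lemma mob_transl_mmul:
  assumes "mdet \<delta> = 1" "Im w > 0"
  shows "mob (mmul (transl n) \<delta>) w = mob \<delta> w + of_int n"
proof -
  obtain a b c d where \<delta>: "\<delta> = (a,b,c,d)" by (cases \<delta>) auto
  have "of_real c * w + of_real d \<noteq> 0" using mob_denom_nonzero[of a d b c w] assms \<delta> by simp
  then show ?thesis unfolding \<delta> transl_def by (simp add: field_simps)
qed

lemma equiv_cusp_rel: "equiv \<Gamma> (cusp_rel \<Gamma>)"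
proof (rule equivI)
  show "cusp_rel \<Gamma> \<subseteq> \<Gamma> \<times> \<Gamma>" by (auto simp: cusp_rel_def)
  show "refl_on \<Gamma> (cusp_rel \<Gamma>)"
    by (rule refl_onI) (auto simp: cusp_rel_def intro!: exI[of _ 0])
  show "sym (cusp_rel \<Gamma>)"
  proof (rule symI)
    fix x y assume "(x, y) \<in> cusp_rel \<Gamma>"
    then obtain n :: int where "x \<in> \<Gamma>" "y \<in> \<Gamma>" "\<forall>w\<in>H. mob y w = mob x w + of_int n"
      by (auto simp: cusp_rel_def)
    then show "(y, x) \<in> cusp_rel \<Gamma>"
      unfolding cusp_rel_def by (auto intro!: exI[of _ "- n"])
  qed
  show "trans (cusp_rel \<Gamma>)"
  proof (rule transI)
    fix x y u assume "(x, y) \<in> cusp_rel \<Gamma>" "(y, u) \<in> cusp_rel \<Gamma>"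
    then obtain n m :: int where "x \<in> \<Gamma>" "u \<in> \<Gamma>"
      "\<forall>w\<in>H. mob y w = mob x w + of_int n" "\<forall>w\<in>H. mob u w = mob y w + of_int m"
      unfolding cusp_rel_def by blast
    then show "(x, u) \<in> cusp_rel \<Gamma>"
      unfolding cusp_rel_def by (auto intro!: exI[of _ "n + m"])
  qed
qed

lemma strip_translate_unique:
  assumes "-1/2 \<le> Re (w + of_int m)" "Re (w + of_int m) < 1/2"
    and "-1/2 \<le> Re (w + of_int n)" "Re (w + of_int n) < 1/2"
  shows "m = n"
proof -
  have "\<bar>real_of_int m - real_of_int n\<bar> < 1" using assms by simp
  then show ?thesis by linarith
qed

lemma canon_pt_in_orbit:
  assumes G: "fuchsian \<Gamma>" "Tmat \<in> \<Gamma>" and z: "Im z > 0" and C: "C \<in> cosets_inf \<Gamma>"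
  shows "\<exists>\<delta>\<in>C. \<delta> \<in> \<Gamma> \<and> mob \<delta> z = canon_pt C z
    \<and> -1/2 \<le> Re (canon_pt C z) \<and> Re (canon_pt C z) < 1/2"
proof -
  obtain \<delta>0 where "\<delta>0 \<in> \<Gamma>" and C_eq: "C = cusp_rel \<Gamma> `` {\<delta>0}"
    using C unfolding cosets_inf_def by (auto elim!: quotientE)
  have det: "mdet \<delta>0 = 1" using fuchsian_mdet[OF G(1) \<open>\<delta>0 \<in> \<Gamma>\<close>] .
  have orbit: "\<exists>n::int. mob \<delta> z = mob \<delta>0 z + of_int n" if "\<delta> \<in> C" for \<delta>
    using that z unfolding C_eq cusp_rel_def H_def by blast
  define n where "n = - \<lfloor>Re (mob \<delta>0 z) + 1/2\<rfloor>"
  define \<delta> where "\<delta> = mmul (transl n) \<delta>0"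
  have "\<delta> \<in> \<Gamma>"
    using G \<open>\<delta>0 \<in> \<Gamma>\<close> transl_in_fuchsian[OF G] unfolding \<delta>_def fuchsian_def by blast
  moreover have "\<forall>w\<in>H. mob \<delta> w = mob \<delta>0 w + of_int n"
    unfolding \<delta>_def using mob_transl_mmul[OF det] by (auto simp: H_def)
  ultimately have "\<delta> \<in> C" unfolding C_eq cusp_rel_def using \<open>\<delta>0 \<in> \<Gamma>\<close> by blast
  have \<delta>z: "mob \<delta> z = mob \<delta>0 z + of_int n"
    using mob_transl_mmul[OF det z] unfolding \<delta>_def .
  have strip: "-1/2 \<le> Re (mob \<delta> z) \<and> Re (mob \<delta> z) < 1/2"
    unfolding \<delta>z n_def using floor_correct[of "Re (mob \<delta>0 z) + 1/2"] by simp linarith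
  have "\<exists>!w. w \<in> (\<lambda>\<delta>. mob \<delta> z) ` C \<and> -1/2 \<le> Re w \<and> Re w < 1/2"
  proof (rule ex_ex1I)
    show "\<exists>w. w \<in> (\<lambda>\<delta>. mob \<delta> z) ` C \<and> -1/2 \<le> Re w \<and> Re w < 1/2"
      using \<open>\<delta> \<in> C\<close> strip by blast
  next
    fix w1 w2
    assume w1: "w1 \<in> (\<lambda>\<delta>. mob \<delta> z) ` C \<and> -1/2 \<le> Re w1 \<and> Re w1 < 1/2"
      and w2: "w2 \<in> (\<lambda>\<delta>. mob \<delta> z) ` C \<and> -1/2 \<le> Re w2 \<and> Re w2 < 1/2"
    then obtain n1 n2 :: int
      where "w1 = mob \<delta>0 z + of_int n1" "w2 = mob \<delta>0 z + of_int n2"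
      using orbit by blast
    moreover from this have "n1 = n2"
      using w1 w2 by (intro strip_translate_unique[of "mob \<delta>0 z"]) auto
    ultimately show "w1 = w2" by simp
  qed
  then have "canon_pt C z = mob \<delta> z"
    unfolding canon_pt_def using \<open>\<delta> \<in> C\<close> strip by (intro the1_equality) auto
  then show ?thesis using \<open>\<delta> \<in> C\<close> \<open>\<delta> \<in> \<Gamma>\<close> strip by auto
qed

lemma le_arcosh_real: "0 \<le> (a::real) \<Longrightarrow> cosh a \<le> x \<Longrightarrow> a \<le> arcosh x"
  using arcosh_less_iff_real[of x "cosh a"] arcosh_cosh_real[of a] cosh_real_ge_1[of a] by linarith

lemma arcosh_le_real: "0 \<le> (a::real) \<Longrightarrow> 1 \<le> x \<Longrightarrow> x \<le> cosh a \<Longrightarrow> arcosh x \<le> a"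
  using arcosh_less_iff_real[of "cosh a" x] arcosh_cosh_real[of a] cosh_real_ge_1[of a] by linarith

lemma cosh_minus_ln: "(y::real) > 0 \<Longrightarrow> cosh (- ln y) = (y + 1 / y) / 2"
  by (simp add: cosh_ln_real field_simps)

lemma minus_ln_Im_le_hdist_height_one:
  assumes "Im u = 1" "Im w > 0" "Im w \<le> 1"
  shows "- ln (Im w) \<le> hdist u w"
proof -
  define y where "y = Im w"
  have y: "y > 0" "y \<le> 1" using assms y_def by auto
  have "(1 - y)\<^sup>2 = \<bar>Im (u - w)\<bar>\<^sup>2" using assms y_def by simp
  also have "\<dots> \<le> (cmod (u - w))\<^sup>2" by (rule power_mono[OF abs_Im_le_cmod]) simp
  finally have "1 + (1 - y)\<^sup>2 / (2 * y) \<le> 1 + (cmod (u - w))\<^sup>2 / (2 * Im u * Im w)"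
    using assms y by (simp add: y_def divide_right_mono)
  moreover have "cosh (- ln y) = 1 + (1 - y)\<^sup>2 / (2 * y)"
    unfolding cosh_minus_ln[OF y(1)] using y by (simp add: field_simps power2_eq_square)
  ultimately show ?thesis
    unfolding hdist_def y_def using y by (intro le_arcosh_real) (auto simp: y_def)
qed

lemma hdist_vertical_height_one:
  assumes "Im w > 0" "Im w \<le> 1"
  shows "hdist (Complex (Re w) 1) w = - ln (Im w)"
proof -
  define y where "y = Im w"
  have y: "y > 0" "y \<le> 1" using assms y_def by auto
  have "1 + (cmod (Complex (Re w) 1 - w))\<^sup>2 / (2 * Im (Complex (Re w) 1) * Im w) = cosh (- ln y)"
    using y unfolding cmod_power2 cosh_minus_ln[OF y(1)]
    by (simp add: y_def[symmetric] field_simps power2_eq_square)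
  then have "hdist (Complex (Re w) 1) w = arcosh (cosh (- ln y))" by (simp add: hdist_def)
  also have "\<dots> = - ln y" using y by (intro arcosh_cosh_real) simp
  finally show ?thesis unfolding y_def .
qed

lemma dist_h_eq_minus_ln_Im:
  assumes "Im w > 0" "Im w \<le> 1" "-1/2 \<le> Re w" "Re w < 1/2"
  shows "dist_h w = - ln (Im w)"
  unfolding dist_h_def
proof (rule antisym)
  have mem: "Complex (Re w) 1 \<in> hseg" using assms by (simp add: hseg_def)
  have "bdd_below ((\<lambda>u. hdist u w) ` hseg)"
    using minus_ln_Im_le_hdist_height_one assms(1,2)
    by (intro bdd_belowI2[of _ "- ln (Im w)"]) (auto simp: hseg_def)
  then show "(INF u\<in>hseg. hdist u w) \<le> - ln (Im w)"
    using cINF_lower[OF _ mem] hdist_vertical_height_one[OF assms(1,2)] by metis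
  show "- ln (Im w) \<le> (INF u\<in>hseg. hdist u w)"
  proof (rule cINF_greatest)
    show "hseg \<noteq> {}" using mem by blast
  qed (use minus_ln_Im_le_hdist_height_one assms in \<open>simp add: hseg_def\<close>)
qed

lemma strip_point_estimate:
  fixes x y :: real
  assumes "\<bar>x\<bar> \<le> 1/2" "0 < y" "y \<le> 1"
  shows "x\<^sup>2 + 1 + y\<^sup>2 \<le> exp 1 + y\<^sup>2 / exp 1"
proof -
  define E where "E = (exp 1 :: real)"
  have E: "E \<ge> 2" using exp_ge_add_one_self[of 1] by (simp add: E_def)
  have "x\<^sup>2 \<le> 1/4"
    using power_mono[of "\<bar>x\<bar>" "1/2" 2] assms(1) by (simp add: power2_eq_square)
  then have x: "E * x\<^sup>2 \<le> E * (1/4)" using E by (intro mult_left_mono) auto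
  have "y\<^sup>2 * (E - 1) \<le> 1 * (E - 1)"
    using assms E by (intro mult_right_mono) (auto simp: power_le_one)
  then have y: "E * y\<^sup>2 \<le> E + y\<^sup>2 - 1" by (simp add: algebra_simps)
  have "0 \<le> (E - 2) * (2 * E - 1)" using E by simp
  also have "\<dots> = 2 * (E * E) - 5 * E + 2" by (simp add: algebra_simps)
  finally have q: "5 * E - 2 \<le> 2 * (E * E)" by linarith
  have "E * (x\<^sup>2 + 1 + y\<^sup>2) = E * x\<^sup>2 + E + E * y\<^sup>2" by (simp add: algebra_simps)
  with x y q E have "E * (x\<^sup>2 + 1 + y\<^sup>2) \<le> E * E + y\<^sup>2" by linarith
  then show ?thesis using E unfolding E_def[symmetric] by (simp add: field_simps)
qed

lemma hdist_i_le_minus_ln_Im_plus_one: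
  assumes "Im w > 0" "Im w \<le> 1" "-1/2 \<le> Re w" "Re w < 1/2"
  shows "hdist \<i> w \<le> - ln (Im w) + 1"
proof -
  define y where "y = Im w"
  have y: "y > 0" "y \<le> 1" using assms y_def by auto
  have "1 + (cmod (\<i> - w))\<^sup>2 / (2 * Im \<i> * Im w) = ((Re w)\<^sup>2 + 1 + y\<^sup>2) / (2 * y)"
    using y unfolding cmod_power2 y_def by (simp add: field_simps power2_eq_square)
  also have "\<dots> \<le> (exp 1 + y\<^sup>2 / exp 1) / (2 * y)"
    using y assms strip_point_estimate[of "Re w" y] by (intro divide_right_mono) auto
  also have "\<dots> = cosh (ln (exp 1 / y))"
    using y by (simp add: cosh_ln_real field_simps power2_eq_square)
  also have "\<dots> = cosh (- ln y + 1)" using y by (simp add: ln_div)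
  finally have "1 + (cmod (\<i> - w))\<^sup>2 / (2 * Im \<i> * Im w) \<le> cosh (- ln y + 1)" .
  moreover have "0 \<le> - ln y + 1" using y ln_le_zero_iff[of y] by linarith
  ultimately show ?thesis
    unfolding hdist_def y_def using y by (intro arcosh_le_real) (auto simp: y_def)
qed

lemma abs_coeffs_le_of_cmod_le:
  fixes u v :: real
  assumes z: "Im z > 0" and q: "cmod (of_real u * z + of_real v) \<le> B"
  shows "\<bar>u\<bar> \<le> B / Im z" "\<bar>v\<bar> \<le> B + B / Im z * cmod z"
proof -
  let ?q = "of_real u * z + of_real v"
  have "\<bar>u\<bar> * Im z \<le> B" using abs_Im_le_cmod[of ?q] q z by (simp add: abs_mult)
  then show u: "\<bar>u\<bar> \<le> B / Im z" using z by (simp add: field_simps)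
  have "\<bar>v\<bar> \<le> \<bar>Re ?q\<bar> + \<bar>u\<bar> * \<bar>Re z\<bar>"
    using abs_triangle_ineq4[of "u * Re z + v" "u * Re z"] by (simp add: abs_mult)
  also have "\<dots> \<le> B + B / Im z * cmod z"
    using abs_Re_le_cmod[of ?q] q u abs_Re_le_cmod[of z]
    by (intro add_mono mult_mono) (auto intro: order.trans)
  finally show "\<bar>v\<bar> \<le> B + B / Im z * cmod z" .
qed

text \<open>The bottom row (c, d) of g is controlled by Im (g z) = Im z / \<bar>c z + d\<bar>^2,
  the top row by a z + b = (g z) (c z + d).\<close>
lemma mnorm_le_of_mob_bounds:
  assumes det: "mdet g = 1" and z: "Im z > 0" and eps: "eps > 0" and M: "M \<ge> 1"
    and Im_ge: "eps \<le> Im (mob g z)" and cmod_le: "cmod (mob g z) \<le> M"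
  shows "mnorm_le g (M * sqrt (Im z / eps) * (1 + (1 + cmod z) / Im z))"
proof -
  obtain a b c d where g: "g = (a,b,c,d)" by (cases g) auto
  have det': "a * d - b * c = 1" using det g by simp
  define K where "K = sqrt (Im z / eps)"
  define q where "q = of_real c * z + of_real d"
  have "q \<noteq> 0" using mob_denom_nonzero[OF det' z] by (simp add: q_def)
  have "eps \<le> Im z / (cmod q)\<^sup>2" using Im_ge Im_mob[OF det' z] by (simp add: g q_def)
  then have "(cmod q)\<^sup>2 \<le> Im z / eps"
    using eps \<open>q \<noteq> 0\<close> by (simp add: pos_le_divide_eq mult.commute)
  then have q_le: "cmod q \<le> K" unfolding K_def by (rule real_le_rsqrt)
  have "cmod (of_real a * z + of_real b) = cmod (mob g z) * cmod q"
    using \<open>q \<noteq> 0\<close> by (simp add: g q_def norm_mult[symmetric])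
  also have "\<dots> \<le> M * K" using cmod_le q_le M by (intro mult_mono) auto
  finally have p_le: "cmod (of_real a * z + of_real b) \<le> M * K" .
  have "K \<ge> 0" unfolding K_def using z eps by simp
  then have "cmod q \<le> M * K" using q_le mult_right_mono[OF M \<open>K \<ge> 0\<close>] by simp
  define R where "R = M * K * (1 + (1 + cmod z) / Im z)"
  have R_eq: "R = M * K + M * K / Im z + M * K / Im z * cmod z"
    unfolding R_def by (simp add: distrib_left add_divide_distrib)
  have "0 \<le> M * K" "0 \<le> M * K / Im z" "0 \<le> M * K / Im z * cmod z"
    using M \<open>K \<ge> 0\<close> z by simp_all
  then have R: "M * K / Im z \<le> R" "M * K + M * K / Im z * cmod z \<le> R"
    unfolding R_eq by linarith+
  show ?thesis
    using abs_coeffs_le_of_cmod_le[OF z \<open>cmod q \<le> M * K\<close>[unfolded q_def]]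
      abs_coeffs_le_of_cmod_le[OF z p_le] R
    unfolding g mnorm_le.simps K_def[symmetric] R_def[symmetric] by (intro conjI) linarith+
qed

locale orbit_below_one =
  fixes \<Gamma> :: "mat2 set" and z :: complex
  assumes fuchsian: "fuchsian \<Gamma>" and Tmat_in: "Tmat \<in> \<Gamma>" and Im_pos: "Im z > 0"
    and Im_orbit_le: "\<And>\<delta>. \<delta> \<in> \<Gamma> \<Longrightarrow> Im (mob \<delta> z) \<le> 1"
begin

lemma canon_pt_bounds:
  assumes "C \<in> cosets_inf \<Gamma>"
  shows "0 < Im (canon_pt C z)" "Im (canon_pt C z) \<le> 1"
    "-1/2 \<le> Re (canon_pt C z)" "Re (canon_pt C z) < 1/2"
proof -
  obtain \<delta> where "\<delta> \<in> \<Gamma>" and \<delta>z: "mob \<delta> z = canon_pt C z"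
    and "-1/2 \<le> Re (canon_pt C z)" "Re (canon_pt C z) < 1/2"
    using canon_pt_in_orbit[OF fuchsian Tmat_in Im_pos assms] by blast
  moreover obtain a b c d where \<delta>: "\<delta> = (a,b,c,d)" by (cases \<delta>) auto
  moreover have det: "a * d - b * c = 1" using fuchsian_mdet[OF fuchsian \<open>\<delta> \<in> \<Gamma>\<close>] \<delta> by simp
  ultimately show "0 < Im (canon_pt C z)"
    using Im_mob[OF det Im_pos] mob_denom_nonzero[OF det Im_pos] Im_pos by auto
  show "Im (canon_pt C z) \<le> 1" using Im_orbit_le[OF \<open>\<delta> \<in> \<Gamma>\<close>] \<delta>z by simp
  show "-1/2 \<le> Re (canon_pt C z)" "Re (canon_pt C z) < 1/2" by fact+
qed

lemma dist_h_canon_pt: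
  "C \<in> cosets_inf \<Gamma> \<Longrightarrow> dist_h (canon_pt C z) = - ln (Im (canon_pt C z))"
  using dist_h_eq_minus_ln_Im canon_pt_bounds by blast

lemma hdist_i_canon_pt_bounds:
  assumes "C \<in> cosets_inf \<Gamma>"
  shows "dist_h (canon_pt C z) \<le> hdist \<i> (canon_pt C z)"
    "hdist \<i> (canon_pt C z) \<le> dist_h (canon_pt C z) + 1"
  using minus_ln_Im_le_hdist_height_one[of \<i>] hdist_i_le_minus_ln_Im_plus_one
    canon_pt_bounds[OF assms] dist_h_canon_pt[OF assms]
  by auto

lemma finite_cosets_Im_canon_pt_ge:
  assumes eps: "eps > 0"
  shows "finite {C \<in> cosets_inf \<Gamma>. eps \<le> Im (canon_pt C z)}"
proof -
  define R where "R = 2 * sqrt (Im z / eps) * (1 + (1 + cmod z) / Im z)"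
  have "{C \<in> cosets_inf \<Gamma>. eps \<le> Im (canon_pt C z)}
      \<subseteq> (\<lambda>g. cusp_rel \<Gamma> `` {g}) ` {g \<in> \<Gamma>. mnorm_le g R}"
  proof
    fix C assume C: "C \<in> {C \<in> cosets_inf \<Gamma>. eps \<le> Im (canon_pt C z)}"
    then obtain \<delta> where "\<delta> \<in> C" "\<delta> \<in> \<Gamma>" and \<delta>z: "mob \<delta> z = canon_pt C z"
      using canon_pt_in_orbit[OF fuchsian Tmat_in Im_pos] by blast
    have "cmod (mob \<delta> z) \<le> 2"
      using cmod_le[of "mob \<delta> z"] canon_pt_bounds[of C] C unfolding \<delta>z by auto
    then have "mnorm_le \<delta> R"
      unfolding R_def using C \<delta>z eps by (intro mnorm_le_of_mob_bounds fuchsian_mdet[OF fuchsian]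
          \<open>\<delta> \<in> \<Gamma>\<close> Im_pos) auto
    moreover obtain \<delta>0 where "C = cusp_rel \<Gamma> `` {\<delta>0}"
      using C unfolding cosets_inf_def by (auto elim!: quotientE)
    then have "C = cusp_rel \<Gamma> `` {\<delta>}"
      using \<open>\<delta> \<in> C\<close> equiv_class_eq[OF equiv_cusp_rel] by blast
    ultimately show "C \<in> (\<lambda>g. cusp_rel \<Gamma> `` {g}) ` {g \<in> \<Gamma>. mnorm_le g R}"
      using \<open>\<delta> \<in> \<Gamma>\<close> by blast
  qed
  moreover have "finite {g \<in> \<Gamma>. mnorm_le g R}" using fuchsian unfolding fuchsian_def by blast
  ultimately show ?thesis by (meson finite_imageI finite_subset)
qed

lemma finite_dist_h_sublevel: "finite {C \<in> cosets_inf \<Gamma>. dist_h (canon_pt C z) \<le> t}"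
proof (rule finite_subset[OF _ finite_cosets_Im_canon_pt_ge[of "exp (- t)"]])
  show "{C \<in> cosets_inf \<Gamma>. dist_h (canon_pt C z) \<le> t}
      \<subseteq> {C \<in> cosets_inf \<Gamma>. exp (- t) \<le> Im (canon_pt C z)}"
    using dist_h_canon_pt canon_pt_bounds(1) by (auto simp: ln_ge_iff[symmetric] minus_le_iff)
qed simp

lemma Pi_i_le_Pi_h: "Pi_i \<Gamma> z t \<le> Pi_h \<Gamma> z t"
  unfolding Pi_i_def Pi_h_def using hdist_i_canon_pt_bounds(1)
  by (intro card_mono finite_dist_h_sublevel) force

lemma Pi_h_le_Pi_i: "Pi_h \<Gamma> z t \<le> Pi_i \<Gamma> z (t + 1)"
proof -
  have "{C \<in> cosets_inf \<Gamma>. hdist \<i> (canon_pt C z) \<le> t + 1}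
      \<subseteq> {C \<in> cosets_inf \<Gamma>. dist_h (canon_pt C z) \<le> t + 1}"
    using hdist_i_canon_pt_bounds(1) by force
  then have "finite {C \<in> cosets_inf \<Gamma>. hdist \<i> (canon_pt C z) \<le> t + 1}"
    using finite_dist_h_sublevel finite_subset by blast
  then show ?thesis
    unfolding Pi_i_def Pi_h_def
    by (intro card_mono) (auto intro: order_trans[OF hdist_i_canon_pt_bounds(2)])
qed

lemma eisenstein_eq_nn_integral_Pi_h:
  assumes "s > 0"
  shows "eisenstein \<Gamma> z s
    = (\<integral>\<^sup>+ t\<in>{0..}. ennreal (s * exp (- s * t) * real (Pi_h \<Gamma> z t)) \<partial>lborel)"
proof -
  have "eisenstein \<Gamma> z s
      = infsum (\<lambda>C. ennreal (exp (- s * dist_h (canon_pt C z)))) (cosets_inf \<Gamma>)"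
    unfolding eisenstein_def
  proof (rule infsum_cong)
    fix C assume C: "C \<in> cosets_inf \<Gamma>"
    then have "Im (canon_pt C z) > 0" by (rule canon_pt_bounds(1))
    then show "ennreal (Im (canon_pt C z) powr s) = ennreal (exp (- s * dist_h (canon_pt C z)))"
      by (simp add: dist_h_canon_pt[OF C] powr_def mult.commute)
  qed
  also have "\<dots> = (\<integral>\<^sup>+ t\<in>{0..}. ennreal (s * exp (- s * t) * real (Pi_h \<Gamma> z t)) \<partial>lborel)"
    unfolding Pi_h_def using assms finite_dist_h_sublevel dist_h_canon_pt canon_pt_bounds
    by (intro infsum_exp_eq_nn_integral_counting) auto
  finally show ?thesis .
qed

end

lemma nn_integral_exp_weight_mono:
  fixes P Q :: "real \<Rightarrow> nat"
  assumes "s \<ge> 0" and "\<And>t. P t \<le> Q t"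
  shows "(\<integral>\<^sup>+ t\<in>{0..}. ennreal (s * exp (- s * t) * real (P t)) \<partial>lborel)
    \<le> (\<integral>\<^sup>+ t\<in>{0..}. ennreal (s * exp (- s * t) * real (Q t)) \<partial>lborel)"
  using assms by (intro nn_integral_mono mult_right_mono ennreal_leI mult_left_mono) auto

theorem proposition2p2:
  fixes \<Gamma> :: "mat2 set" and z :: complex and s :: real
  assumes "fuchsian \<Gamma>" and "Tmat \<in> \<Gamma>"
    and "s > 1"
    and "Im z > 0" and "Im z < 1"
    and "\<forall>\<delta>\<in>\<Gamma>. \<not> (Im (mob \<delta> z) > 1)"
  shows "(\<forall>t::real. Pi_i \<Gamma> z t \<le> Pi_h \<Gamma> z t \<and> Pi_h \<Gamma> z t \<le> Pi_i \<Gamma> z (t + 1))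
    \<and> eisenstein \<Gamma> z s
        = (\<integral>\<^sup>+ t\<in>{0..}. ennreal (s * exp (- s * t) * real (Pi_h \<Gamma> z t)) \<partial>lborel)
    \<and> (\<integral>\<^sup>+ t\<in>{0..}. ennreal (s * exp (- s * t) * real (Pi_i \<Gamma> z t)) \<partial>lborel)
        \<le> eisenstein \<Gamma> z s
    \<and> eisenstein \<Gamma> z s
        \<le> (\<integral>\<^sup>+ t\<in>{0..}. ennreal (s * exp (- s * t) * real (Pi_i \<Gamma> z (t + 1))) \<partial>lborel)"
proof -
  interpret orbit_below_one \<Gamma> z
    using assms by unfold_locales (auto simp: not_less)
  have "s > 0" using \<open>s > 1\<close> by simp
  then show ?thesis
    using Pi_i_le_Pi_h Pi_h_le_Pi_i eisenstein_eq_nn_integral_Pi_h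
      nn_integral_exp_weight_mono[of s "Pi_i \<Gamma> z" "Pi_h \<Gamma> z"]
      nn_integral_exp_weight_mono[of s "Pi_h \<Gamma> z" "\<lambda>t. Pi_i \<Gamma> z (t + 1)"]
    by auto
qed

end
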